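(* Let $\partial(X)$ be a tight cut of a connected bipartite cubic graph $H[A,B]$, with notation chosen so that $X^+\subseteq B$, and let $H_1:=H/\overline{X}\rightarrow\overline{x}$ and $H_2:=H/X\rightarrow x$. Then: (i) for every $a\in X^-$ and $b\in\overline{X}^-$, the pair $(a,b)$ is not $\lambda$-matchable in $H$; (ii) for every $a\in X^-$ and $b\in X^+$, $(a,b)$ is $\lambda$-matchable in $H$ if and only if it is $\lambda$-matchable in $H_1$; (iii) for every $a\in\overline{X}^+$ and $b\in X^+$, $(a,b)$ is $\lambda$-matchable in $H$ if and only if $(\overline{x},b)$ is $\lambda$-matchable in $H_1$ and $(a,x)$ is $\lambda$-matchable in $H_2$.
   Context: Graphs are loopless but may have parallel edges. A cut $C$ of a matching covered graph is tight if $|C\cap M|=1$ for every perfect matching $M$; tight cuts are odd. For an odd cut $\partial(X)$ of a bipartite graph $H[A,B]$, $X^+$ and $X^-$ denote the larger and smaller of $X\cap A$ and $X\cap B$, and $\overline{X}^+,\overline{X}^-$ are defined analogously for $\overline{X}=V(H)-X$ (so with $X^+\subseteq B$ one has $X^-\subseteq A$, $\overline{X}^+\subseteq A$, $\overline{X}^-\subseteq B$). $H/\overline{X}\rightarrow\overline{x}$ denotes $H$ with $\overline{X}$ shrunk to a vertex $\overline{x}$ (similarly $H/X\rightarrow x$); these contractions are bipartite cubic, with $\overline{x}$ in the class of $A$ and $x$ in the class of $B$. For a connected bipartite cubic graph and vertices $a,b$ in different color classes, an $(a,b)$-matching is a spanning subgraph with $a,b$ of degree $3$ and all other vertices of degree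 $1$; $(a,b)$ is $\lambda$-matchable if one exists. *)

theory Defs
  imports Main
begin

text \<open>Finite loopless multigraphs: an edge e has endpoint set ends e of size 2
  (parallel edges = distinct edges with the same endpoint set).\<close>

record ('v, 'e) mgraph =
  verts :: "'v set"
  edges :: "'e set"
  ends  :: "'e \<Rightarrow> 'v set"

definition multigraph :: "('v, 'e) mgraph \<Rightarrow> bool" where
  "multigraph G \<longleftrightarrow> finite (verts G) \<and> finite (edges G) \<and>
     (\<forall>e\<in>edges G. ends G e \<subseteq> verts G \<and> card (ends G e) = 2)"

definition deg :: "('v, 'e) mgraph \<Rightarrow> 'e set \<Rightarrow> 'v \<Rightarrow> nat" where
  "deg G F v = card {e \<in> F. v \<in> ends G e}"

definition cubic :: "('v, 'e) mgraph \<Rightarrow> bool" where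
  "cubic G \<longleftrightarrow> (\<forall>v\<in>verts G. deg G (edges G) v = 3)"

definition adjacent :: "('v, 'e) mgraph \<Rightarrow> 'v \<Rightarrow> 'v \<Rightarrow> bool" where
  "adjacent G u v \<longleftrightarrow> (\<exists>e\<in>edges G. ends G e = {u, v})"

definition connected_graph :: "('v, 'e) mgraph \<Rightarrow> bool" where
  "connected_graph G \<longleftrightarrow> (\<forall>u\<in>verts G. \<forall>v\<in>verts G. (adjacent G)\<^sup>*\<^sup>* u v)"

definition bipartite_on :: "('v, 'e) mgraph \<Rightarrow> 'v set \<Rightarrow> 'v set \<Rightarrow> bool" where
  "bipartite_on G A B \<longleftrightarrow> A \<union> B = verts G \<and> A \<inter> B = {} \<and>
     (\<forall>e\<in>edges G. \<exists>a\<in>A. \<exists>b\<in>B. ends G e = {a, b})"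

definition cut :: "('v, 'e) mgraph \<Rightarrow> 'v set \<Rightarrow> 'e set" where
  "cut G X = {e \<in> edges G. card (ends G e \<inter> X) = 1}"

definition perfect_matching :: "('v, 'e) mgraph \<Rightarrow> 'e set \<Rightarrow> bool" where
  "perfect_matching G M \<longleftrightarrow> M \<subseteq> edges G \<and> (\<forall>v\<in>verts G. deg G M v = 1)"

definition tight_cut :: "('v, 'e) mgraph \<Rightarrow> 'v set \<Rightarrow> bool" where
  "tight_cut G X \<longleftrightarrow> X \<subseteq> verts G \<and>
     (\<forall>M. perfect_matching G M \<longrightarrow> card (cut G X \<inter> M) = 1)"

definition lambda_matching :: "('v, 'e) mgraph \<Rightarrow> 'v \<Rightarrow> 'v \<Rightarrow> 'e set \<Rightarrow> bool" where
  "lambda_matching G a b F \<longleftrightarrow> F \<subseteq> edges G \<and> deg G F a = 3 \<and> deg G F b = 3 \<and>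
     (\<forall>v\<in>verts G - {a, b}. deg G F v = 1)"

definition lambda_matchable :: "('v, 'e) mgraph \<Rightarrow> 'v \<Rightarrow> 'v \<Rightarrow> bool" where
  "lambda_matchable G a b \<longleftrightarrow> (\<exists>F. lambda_matching G a b F)"

text \<open>G/S \<rightarrow> s: shrink S to a single new vertex, represented as None; the other
  vertices v become Some v. Edges inside S are deleted, the others are kept
  (so parallel edges may arise).\<close>
definition shrink :: "('v, 'e) mgraph \<Rightarrow> 'v set \<Rightarrow> ('v option, 'e) mgraph" where
  "shrink G S = \<lparr> verts = Some ` (verts G - S) \<union> {None},
                  edges = {e \<in> edges G. \<not> ends G e \<subseteq> S},
                  ends = (\<lambda>e. (\<lambda>v. if v \<in> S then None else Some v) ` ends G e) \<rparr>"

end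

theory Submission
  imports Defs
begin

(* Every edge of a regular bipartite multigraph lies in a perfect matching (Hall's theorem).
   Each perfect matching crosses the tight cut d(X) exactly once, while X has one more vertex in
   B than in A; counting degrees over X therefore shows that no edge leaves X from its A-side and
   that d(X) has exactly 3 edges. The same count for an (a,b)-matching F gives
   |F \<inter> d(X)| + 2[a \<in> X] = 1 + 2[b \<in> X]. This excludes (i); in (ii) and (iii) F crosses
   the cut in one, respectively all three, edges, so it restricts to matchings of the
   contractions. Conversely, in (ii) an (a,b)-matching of H1 is glued to a perfect matching of H
   through its unique cut edge, and in (iii) the matchings of the two contractions both contain
   the whole cut and glue directly. *)

section \<open>Hall's marriage theorem\<close>

lemma Hall_condition_delete_element:
  assumes surplus: "\<And>S. S \<noteq> {} \<Longrightarrow> S \<subset> A \<Longrightarrow> card S < card (\<Union>(N ` S))"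
    and S: "S \<subseteq> A - {a}" and a: "a \<in> A"
  shows "card S \<le> card (\<Union>x\<in>S. N x - {b})"
proof (cases "S = {}")
  case False
  have "S \<subset> A" using S a by auto
  then have "card S < card (\<Union>(N ` S))" using surplus False by blast
  moreover have "(\<Union>x\<in>S. N x - {b}) = \<Union>(N ` S) - {b}" by auto
  moreover have "card (\<Union>(N ` S)) \<le> card (\<Union>(N ` S) - {b}) + 1"
    by (cases "b \<in> \<Union>(N ` S)"; cases "finite (\<Union>(N ` S))") (auto simp: card_Diff_singleton_if)
  ultimately show ?thesis by simp
qed simp

lemma Hall_condition_delete_critical:
  assumes hall: "\<And>S. S \<subseteq> A \<Longrightarrow> card S \<le> card (\<Union>(N ` S))"
    and fin: "finite A" "\<And>x. x \<in> A \<Longrightarrow> finite (N x)"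
    and S: "S \<subseteq> A" "card (\<Union>(N ` S)) \<le> card S" and T: "T \<subseteq> A - S"
  shows "card T \<le> card (\<Union>x\<in>T. N x - \<Union>(N ` S))"
proof -
  have fin_S: "finite S" "finite T" using S T fin by (auto intro: finite_subset)
  have fin_N: "finite (\<Union>(N ` S))" "finite (\<Union>x\<in>T. N x - \<Union>(N ` S))"
  proof -
    have "finite (\<Union>(N ` A))" using fin by blast
    then show "finite (\<Union>(N ` S))" "finite (\<Union>x\<in>T. N x - \<Union>(N ` S))"
      by (rule finite_subset[rotated]; use S T in blast)+
  qed
  have "card T + card S = card (T \<union> S)"
    using fin_S T by (subst card_Un_disjoint) auto
  also have "\<dots> \<le> card (\<Union>(N ` (T \<union> S)))" using S T by (intro hall) blast
  also have "\<Union>(N ` (T \<union> S)) = (\<Union>x\<in>T. N x - \<Union>(N ` S)) \<union> \<Union>(N ` S)" by blast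
  also have "card \<dots> = card (\<Union>x\<in>T. N x - \<Union>(N ` S)) + card (\<Union>(N ` S))"
    using fin_N by (subst card_Un_disjoint) auto
  finally show ?thesis using S(2) by linarith
qed

theorem Hall_marriage:
  assumes "finite A" "\<And>x. x \<in> A \<Longrightarrow> finite (N x)"
    and "\<And>S. S \<subseteq> A \<Longrightarrow> card S \<le> card (\<Union>(N ` S))"
  shows "\<exists>f. inj_on f A \<and> (\<forall>x\<in>A. f x \<in> N x)"
  using assms
proof (induction "card A" arbitrary: A N rule: less_induct)
  case less
  note fin = less.prems(1,2) and hall = less.prems(3)
  consider "A = {}" | (surplus) "A \<noteq> {}" "\<And>S. S \<noteq> {} \<Longrightarrow> S \<subset> A \<Longrightarrow> card S < card (\<Union>(N ` S))"
    | (critical) S where "S \<noteq> {}" "S \<subset> A" "card (\<Union>(N ` S)) \<le> card S"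
    by (meson leI)
  then show ?case
  proof cases
    case surplus
    then obtain a where a: "a \<in> A" by blast
    have "N a \<noteq> {}" using hall[of "{a}"] a by auto
    then obtain b where b: "b \<in> N a" by blast
    have "\<exists>f. inj_on f (A - {a}) \<and> (\<forall>x\<in>A - {a}. f x \<in> N x - {b})"
      using Hall_condition_delete_element[OF surplus(2) _ a] fin
      by (intro less.hyps card_Diff1_less[OF fin(1) a]) auto
    then obtain f where f: "inj_on f (A - {a})" "\<forall>x\<in>A - {a}. f x \<in> N x - {b}" by blast
    have "inj_on (f(a := b)) (A - {a})" using f by (intro inj_on_fun_updI) auto
    then have "inj_on (f(a := b)) (insert a (A - {a}))" unfolding inj_on_insert using f by auto
    then show ?thesis using f a b by (intro exI[of _ "f(a := b)"]) (simp add: insert_absorb)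
  next
    case critical
    define NS where "NS = \<Union>(N ` S)"
    have "finite S" "S \<subseteq> A" using critical fin by (auto intro: finite_subset)
    have S_smaller: "card S < card A" using critical fin by (auto intro: psubset_card_mono)
    have rest_smaller: "card (A - S) < card A"
      using card_Diff_subset[OF \<open>finite S\<close> \<open>S \<subseteq> A\<close>] S_smaller
        card_gt_0_iff[of S] critical(1) \<open>finite S\<close> by linarith
    have "\<exists>f. inj_on f S \<and> (\<forall>x\<in>S. f x \<in> N x)"
      using \<open>S \<subseteq> A\<close> fin hall by (intro less.hyps[OF S_smaller \<open>finite S\<close>]) auto
    then obtain f1 where f1: "inj_on f1 S" "\<forall>x\<in>S. f1 x \<in> N x" by blast
    have "\<exists>f. inj_on f (A - S) \<and> (\<forall>x\<in>A - S. f x \<in> N x - NS)"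
      using Hall_condition_delete_critical[OF hall fin \<open>S \<subseteq> A\<close> critical(3)] fin
      unfolding NS_def by (intro less.hyps[OF rest_smaller]) auto
    then obtain f2 where f2: "inj_on f2 (A - S)" "\<forall>x\<in>A - S. f2 x \<in> N x - NS" by blast
    have "inj_on (\<lambda>x. if x \<in> S then f1 x else f2 x) (S \<union> (A - S))"
      by (rule inj_on_disjoint_Un[OF f1(1) f2(1)]) (use f1(2) f2(2) in \<open>auto simp: NS_def\<close>)
    moreover have "S \<union> (A - S) = A" using critical(2) by blast
    ultimately show ?thesis using f1(2) f2(2) by (intro exI[of _ "\<lambda>x. if x \<in> S then f1 x else f2 x"]) auto
  qed simp
qed

section \<open>Degrees, lambda-matchings and shrinking\<close>

lemma sum_deg_eq_card:
  assumes "finite P" "finite F" "\<And>e v. e \<in> F \<Longrightarrow> v \<in> P \<Longrightarrow> v \<in> ends G e \<longleftrightarrow> v = h e"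
  shows "(\<Sum>v\<in>P. deg G F v) = card {e \<in> F. h e \<in> P}"
proof -
  have "(\<Sum>v\<in>P. deg G F v) = (\<Sum>v\<in>P. card {e \<in> F. h e = v})"
    unfolding deg_def using assms(3) by (intro sum.cong refl arg_cong[where f = card]) auto
  also have "\<dots> = card (\<Union>v\<in>P. {e \<in> F. h e = v})"
    using assms(1,2) by (subst card_UN_disjoint) auto
  also have "(\<Union>v\<in>P. {e \<in> F. h e = v}) = {e \<in> F. h e \<in> P}" by auto
  finally show ?thesis .
qed

lemma sum_deg_const:
  assumes "\<And>v. v \<in> P \<Longrightarrow> deg G F v = c"
  shows "(\<Sum>v\<in>P. deg G F v) = c * card P"
proof -
  have "(\<Sum>v\<in>P. deg G F v) = (\<Sum>v\<in>P. c)" using assms by (rule sum.cong[OF refl])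
  then show ?thesis by simp
qed

lemma deg_lambda_matching:
  "lambda_matching G a b F \<Longrightarrow> v \<in> verts G \<Longrightarrow> deg G F v = (if v \<in> {a, b} then 3 else 1)"
  by (auto simp: lambda_matching_def)

lemma sum_deg_lambda_matching:
  assumes "lambda_matching G a b F" "P \<subseteq> verts G" "finite P"
  shows "(\<Sum>v\<in>P. deg G F v) = card P + 2 * card (P \<inter> {a, b})"
proof -
  have "(\<Sum>v\<in>P. deg G F v) = (\<Sum>v\<in>P. 1 + 2 * of_bool (v \<in> {a, b}))"
    using deg_lambda_matching[OF assms(1)] assms(2) by (intro sum.cong) auto
  also have "\<dots> = (\<Sum>v\<in>P. 1) + 2 * (\<Sum>v\<in>P. of_bool (v \<in> {a, b}))"
    by (simp only: sum.distrib sum_distrib_left)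
  also have "\<dots> = card P + 2 * card (P \<inter> {a, b})"
    using assms(3) by (subst sum_of_bool_eq) (simp_all add: Collect_disj_eq insert_commute)
  finally show ?thesis .
qed

lemma lambda_matching_iff_deg:
  assumes "a \<in> verts G" "b \<in> verts G"
  shows "lambda_matching G a b F \<longleftrightarrow>
    F \<subseteq> edges G \<and> (\<forall>v\<in>verts G. deg G F v = (if v \<in> {a, b} then 3 else 1))"
  using assms unfolding lambda_matching_def by auto

lemma verts_shrink: "verts (shrink H S) = insert None (Some ` (verts H - S))"
  by (auto simp: shrink_def)

lemma mem_cut_iff:
  assumes "multigraph H" "e \<in> edges H"
  shows "e \<in> cut H S \<longleftrightarrow> ends H e \<inter> S \<noteq> {} \<and> \<not> ends H e \<subseteq> S"
proof -
  have "card (ends H e) = 2" using assms unfolding multigraph_def by blast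
  then obtain x y where "ends H e = {x, y}" "x \<noteq> y" by (auto simp: card_2_iff)
  then show ?thesis using assms(2) unfolding cut_def
    by (cases "x \<in> S"; cases "y \<in> S") (auto simp: Int_insert_left)
qed

lemma cut_complement:
  assumes "multigraph H"
  shows "cut H (verts H - S) = cut H S"
proof (rule set_eqI)
  fix e
  show "e \<in> cut H (verts H - S) \<longleftrightarrow> e \<in> cut H S"
  proof (cases "e \<in> edges H")
    case True
    then have "ends H e \<subseteq> verts H" using assms unfolding multigraph_def by blast
    then show ?thesis unfolding mem_cut_iff[OF assms True] by blast
  qed (simp add: cut_def)
qed

lemma cut_subset_edges_shrink:
  assumes "multigraph H"
  shows "cut H S \<subseteq> edges (shrink H S)"
proof
  fix e assume "e \<in> cut H S"
  moreover from this have "e \<in> edges H" by (simp add: cut_def)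
  ultimately show "e \<in> edges (shrink H S)" using mem_cut_iff[OF assms] by (simp add: shrink_def)
qed

lemma deg_shrink_Some:
  assumes "v \<notin> S"
  shows "deg (shrink H S) F (Some v) = deg H F v"
  unfolding deg_def shrink_def using assms
  by (intro arg_cong[where f = card]) (auto split: if_splits)

lemma deg_shrink_restrict:
  assumes "v \<notin> S" "F \<subseteq> edges H"
  shows "deg (shrink H S) (F \<inter> edges (shrink H S)) (Some v) = deg H F v"
  unfolding deg_shrink_Some[OF assms(1)] unfolding deg_def shrink_def using assms
  by (intro arg_cong[where f = card]) auto

lemma deg_shrink_None:
  assumes "multigraph H" "F \<subseteq> edges (shrink H S)"
  shows "deg (shrink H S) F None = card (F \<inter> cut H S)"
proof -
  have "None \<in> ends (shrink H S) e \<longleftrightarrow> ends H e \<inter> S \<noteq> {}" for e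
    by (auto simp: shrink_def split: if_splits)
  moreover have "e \<in> edges H" "\<not> ends H e \<subseteq> S" if "e \<in> F" for e
    using that assms(2) by (auto simp: shrink_def)
  ultimately have "None \<in> ends (shrink H S) e \<longleftrightarrow> e \<in> cut H S" if "e \<in> F" for e
    using that mem_cut_iff[OF assms(1)] by blast
  then show ?thesis unfolding deg_def by (intro arg_cong[where f = card]) blast
qed

lemma edges_shrink_subset: "edges (shrink H S) \<subseteq> edges H"
  by (simp add: shrink_def)

lemma deg_Un_shrink:
  assumes "multigraph H" "F' \<subseteq> edges (shrink H S)" "v \<in> S" "F' \<inter> cut H S \<subseteq> F"
  shows "deg H (F \<union> F') v = deg H F v"
proof -
  have "e \<in> F" if "e \<in> F'" "v \<in> ends H e" for e
  proof -
    have "e \<in> edges H" "\<not> ends H e \<subseteq> S" using that(1) assms(2) by (auto simp: shrink_def)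
    then have "e \<in> cut H S" using mem_cut_iff[OF assms(1) \<open>e \<in> edges H\<close>] that(2) assms(3) by blast
    then show ?thesis using assms(4) that(1) by blast
  qed
  then show ?thesis unfolding deg_def by (intro arg_cong[where f = card]) blast
qed

lemma lambda_matching_shrink:
  assumes H: "multigraph H" and F: "lambda_matching H a b F"
    and ab: "a \<in> verts H" "b \<in> verts H"
    and cut: "card (F \<inter> cut H S) = (if a \<in> S \<or> b \<in> S then 3 else 1)"
  shows "lambda_matching (shrink H S) (if a \<in> S then None else Some a)
    (if b \<in> S then None else Some b) (F \<inter> edges (shrink H S))"
    (is "lambda_matching _ ?a ?b ?F")
proof -
  have FE: "F \<subseteq> edges H" and deg: "\<And>v. v \<in> verts H \<Longrightarrow> deg H F v = (if v \<in> {a, b} then 3 else 1)"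
    using F ab by (auto simp: lambda_matching_iff_deg)
  have "?F \<inter> cut H S = F \<inter> cut H S"
    using cut_subset_edges_shrink[OF H] by blast
  then have "deg (shrink H S) ?F None = (if None \<in> {?a, ?b} then 3 else 1)"
    using deg_shrink_None[OF H, of ?F] cut by simp
  moreover have "deg (shrink H S) ?F (Some v) = (if Some v \<in> {?a, ?b} then 3 else 1)"
    if "v \<in> verts H - S" for v
    using deg_shrink_restrict[OF _ FE, of v S] deg[of v] that by auto
  moreover have "?a \<in> verts (shrink H S)" "?b \<in> verts (shrink H S)" using ab by (auto simp: verts_shrink)
  ultimately show ?thesis by (simp add: lambda_matching_iff_deg verts_shrink)
qed

lemma lambda_matching_glue:
  assumes H: "multigraph H" and ab: "a \<in> verts H" "b \<in> verts H"
    and F1: "F1 \<subseteq> edges (shrink H (verts H - S))" and F2: "F2 \<subseteq> edges (shrink H S)"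
    and agree: "F1 \<inter> cut H S = F2 \<inter> cut H S"
    and deg1: "\<And>v. v \<in> verts H \<Longrightarrow> v \<in> S \<Longrightarrow>
      deg (shrink H (verts H - S)) F1 (Some v) = (if v \<in> {a, b} then 3 else 1)"
    and deg2: "\<And>v. v \<in> verts H \<Longrightarrow> v \<notin> S \<Longrightarrow>
      deg (shrink H S) F2 (Some v) = (if v \<in> {a, b} then 3 else 1)"
  shows "lambda_matching H a b (F1 \<union> F2)"
proof -
  have "deg H (F1 \<union> F2) v = (if v \<in> {a, b} then 3 else 1)" if v: "v \<in> verts H" for v
  proof (cases "v \<in> S")
    case True
    have "F2 \<inter> cut H S \<subseteq> F1" using agree by blast
    with True have "deg H (F1 \<union> F2) v = deg H F1 v" by (rule deg_Un_shrink[OF H F2])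
    moreover have "v \<notin> verts H - S" using True by blast
    ultimately show ?thesis using deg1[OF v True] deg_shrink_Some[of v "verts H - S" H F1] by simp
  next
    case False
    have "v \<in> verts H - S" using v False by blast
    moreover have "F1 \<inter> cut H (verts H - S) \<subseteq> F2" unfolding cut_complement[OF H] using agree by blast
    ultimately have "deg H (F2 \<union> F1) v = deg H F2 v" by (rule deg_Un_shrink[OF H F1])
    then show ?thesis using deg2[OF v False] deg_shrink_Some[OF False, of H F2] by (simp add: Un_commute)
  qed
  moreover have "F1 \<union> F2 \<subseteq> edges H"
    using F1 F2 edges_shrink_subset[of H S] edges_shrink_subset[of H "verts H - S"] by blast
  ultimately show ?thesis using ab by (simp add: lambda_matching_iff_deg)
qed

section \<open>Regular bipartite multigraphs\<close>

locale bipartite_multigraph =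
  fixes H :: "('v, 'e) mgraph" and A B :: "'v set"
  assumes multigraph: "multigraph H" and bipartite: "bipartite_on H A B"
begin

definition aend :: "'e \<Rightarrow> 'v" where "aend e = (THE a. a \<in> A \<and> a \<in> ends H e)"
definition bend :: "'e \<Rightarrow> 'v" where "bend e = (THE b. b \<in> B \<and> b \<in> ends H e)"

lemma verts_eq: "verts H = A \<union> B" and A_B_disjoint: "A \<inter> B = {}"
  using bipartite unfolding bipartite_on_def by auto

lemma finite_edges: "finite (edges H)" and finite_A: "finite A" and finite_B: "finite B"
  using multigraph verts_eq unfolding multigraph_def by auto

lemma ends_eq:
  assumes "e \<in> edges H"
  shows "aend e \<in> A" "bend e \<in> B" "ends H e = {aend e, bend e}"
proof -
  obtain a b where ab: "a \<in> A" "b \<in> B" "ends H e = {a, b}"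
    using bipartite assms unfolding bipartite_on_def by blast
  have "aend e = a" "bend e = b"
    unfolding aend_def bend_def using ab A_B_disjoint by (auto intro!: the_equality)
  then show "aend e \<in> A" "bend e \<in> B" "ends H e = {aend e, bend e}" using ab by auto
qed

lemma mem_ends_A: "e \<in> edges H \<Longrightarrow> v \<in> A \<Longrightarrow> v \<in> ends H e \<longleftrightarrow> v = aend e"
  using ends_eq[of e] A_B_disjoint by auto

lemma mem_ends_B: "e \<in> edges H \<Longrightarrow> v \<in> B \<Longrightarrow> v \<in> ends H e \<longleftrightarrow> v = bend e"
  using ends_eq[of e] A_B_disjoint by auto

lemma sum_deg_A:
  assumes "F \<subseteq> edges H" "P \<subseteq> A"
  shows "(\<Sum>v\<in>P. deg H F v) = card {e \<in> F. aend e \<in> P}"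
proof (rule sum_deg_eq_card)
  show "finite P" using assms(2) finite_A by (rule finite_subset)
  show "finite F" using assms(1) finite_edges by (rule finite_subset)
qed (use assms mem_ends_A in blast)

lemma sum_deg_B:
  assumes "F \<subseteq> edges H" "P \<subseteq> B"
  shows "(\<Sum>v\<in>P. deg H F v) = card {e \<in> F. bend e \<in> P}"
proof (rule sum_deg_eq_card)
  show "finite P" using assms(2) finite_B by (rule finite_subset)
  show "finite F" using assms(1) finite_edges by (rule finite_subset)
qed (use assms mem_ends_B in blast)

lemma deg_A: "F \<subseteq> edges H \<Longrightarrow> v \<in> A \<Longrightarrow> deg H F v = card {e \<in> F. aend e = v}"
  and deg_B: "F \<subseteq> edges H \<Longrightarrow> v \<in> B \<Longrightarrow> deg H F v = card {e \<in> F. bend e = v}"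
  using sum_deg_A[of F "{v}"] sum_deg_B[of F "{v}"] by auto

lemma cut_iff: "e \<in> cut H X \<longleftrightarrow> e \<in> edges H \<and> (aend e \<in> X \<longleftrightarrow> bend e \<notin> X)"
proof (cases "e \<in> edges H")
  case True
  then show ?thesis using mem_cut_iff[OF multigraph True] ends_eq[OF True] by auto
qed (simp add: cut_def)

lemma sum_deg_crossing_balance:
  assumes F: "F \<subseteq> edges H"
  shows "(\<Sum>v\<in>X \<inter> B. deg H F v) + card {e \<in> F. aend e \<in> X \<and> bend e \<notin> X}
       = (\<Sum>v\<in>X \<inter> A. deg H F v) + card {e \<in> F. aend e \<notin> X \<and> bend e \<in> X}"
proof -
  have fin: "finite F" using F finite_edges by (rule finite_subset)
  have "(\<Sum>v\<in>X \<inter> B. deg H F v) = card {e \<in> F. bend e \<in> X}"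
    using sum_deg_B[OF F, of "X \<inter> B"] ends_eq F by (auto intro!: arg_cong[where f = card])
  also have "\<dots> + card {e \<in> F. aend e \<in> X \<and> bend e \<notin> X}
      = card ({e \<in> F. bend e \<in> X} \<union> {e \<in> F. aend e \<in> X \<and> bend e \<notin> X})"
    using fin by (intro card_Un_disjoint[symmetric]) auto
  also have "\<dots> = card ({e \<in> F. aend e \<in> X} \<union> {e \<in> F. aend e \<notin> X \<and> bend e \<in> X})"
    by (rule arg_cong[where f = card]) blast
  also have "\<dots> = card {e \<in> F. aend e \<in> X} + card {e \<in> F. aend e \<notin> X \<and> bend e \<in> X}"
    using fin by (intro card_Un_disjoint) auto
  also have "card {e \<in> F. aend e \<in> X} = (\<Sum>v\<in>X \<inter> A. deg H F v)"
    using sum_deg_A[OF F, of "X \<inter> A"] ends_eq F by (auto intro!: arg_cong[where f = card])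
  finally show ?thesis .
qed

lemma perfect_matching_image:
  assumes g: "\<And>x. x \<in> A \<Longrightarrow> g x \<in> edges H \<and> aend (g x) = x"
    and bij: "bij_betw (bend \<circ> g) A B"
  shows "perfect_matching H (g ` A)"
proof -
  have M: "g ` A \<subseteq> edges H" using g by blast
  have "deg H (g ` A) v = 1" if "v \<in> A" for v
  proof -
    have "{e \<in> g ` A. aend e = v} = {g v}" using g that by force
    then show ?thesis using deg_A[OF M that] by simp
  qed
  moreover have "deg H (g ` A) v = 1" if "v \<in> B" for v
  proof -
    have "v \<in> (bend \<circ> g) ` A" using bij that by (simp add: bij_betw_def)
    then obtain x where x: "x \<in> A" "bend (g x) = v" by auto
    have "{e \<in> g ` A. bend e = v} = {g x}"
      using x bij by (auto simp: bij_betw_def inj_on_def)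
    then show ?thesis using deg_B[OF M that] by simp
  qed
  ultimately show ?thesis using M verts_eq unfolding perfect_matching_def by blast
qed

end

locale regular_bipartite_multigraph = bipartite_multigraph H A B
  for H :: "('v, 'e) mgraph" and A B :: "'v set" +
  fixes k :: nat
  assumes regular: "\<And>v. v \<in> verts H \<Longrightarrow> deg H (edges H) v = k" and degree_pos: "0 < k"
begin

lemma card_edges_at_A:
  assumes "P \<subseteq> A"
  shows "card {e \<in> edges H. aend e \<in> P} = k * card P"
proof -
  have "(\<Sum>v\<in>P. deg H (edges H) v) = k * card P" using assms regular verts_eq by (intro sum_deg_const) auto
  then show ?thesis using sum_deg_A[OF order_refl assms] by simp
qed

lemma card_edges_at_B:
  assumes "P \<subseteq> B"
  shows "card {e \<in> edges H. bend e \<in> P} = k * card P"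
proof -
  have "(\<Sum>v\<in>P. deg H (edges H) v) = k * card P" using assms regular verts_eq by (intro sum_deg_const) auto
  then show ?thesis using sum_deg_B[OF order_refl assms] by simp
qed

lemma card_A_eq_card_B: "card A = card B"
proof -
  have "{e \<in> edges H. aend e \<in> A} = edges H" "{e \<in> edges H. bend e \<in> B} = edges H"
    using ends_eq by auto
  then show ?thesis using card_edges_at_A[of A] card_edges_at_B[of B] degree_pos by simp
qed

definition nbrs :: "'v set \<Rightarrow> 'v set" where "nbrs S = bend ` {e \<in> edges H. aend e \<in> S}"

lemma edges_at_subset_edges_at_nbrs:
  "{e \<in> edges H. aend e \<in> S} \<subseteq> {e \<in> edges H. bend e \<in> nbrs S}"
  by (auto simp: nbrs_def)

lemma nbrs_subset_B: "nbrs S \<subseteq> B"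
  using ends_eq by (auto simp: nbrs_def)

lemma card_le_card_nbrs:
  assumes "S \<subseteq> A"
  shows "card S \<le> card (nbrs S)"
proof -
  have "k * card S = card {e \<in> edges H. aend e \<in> S}" using card_edges_at_A[OF assms] by simp
  also have "\<dots> \<le> card {e \<in> edges H. bend e \<in> nbrs S}"
    using finite_edges by (intro card_mono edges_at_subset_edges_at_nbrs) simp
  also have "\<dots> = k * card (nbrs S)" using card_edges_at_B[OF nbrs_subset_B] .
  finally show ?thesis using degree_pos by simp
qed

lemma card_less_card_nbrs:
  assumes "S \<subseteq> A" "e \<in> edges H" "aend e \<notin> S" "bend e \<in> nbrs S"
  shows "card S < card (nbrs S)"
proof -
  have "k * card S = card {e \<in> edges H. aend e \<in> S}" using card_edges_at_A[OF assms(1)] by simp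
  also have "\<dots> < card {e \<in> edges H. bend e \<in> nbrs S}"
    using edges_at_subset_edges_at_nbrs assms(2-4) finite_edges by (intro psubset_card_mono) auto
  also have "\<dots> = k * card (nbrs S)" using card_edges_at_B[OF nbrs_subset_B] .
  finally show ?thesis by simp
qed

lemma Hall_condition_avoiding_edge:
  assumes e: "e \<in> edges H" and S: "S \<subseteq> A - {aend e}"
  shows "card S \<le> card (\<Union>x\<in>S. nbrs {x} - {bend e})"
proof -
  have "(\<Union>x\<in>S. nbrs {x} - {bend e}) = nbrs S - {bend e}" by (auto simp: nbrs_def)
  moreover have "finite (nbrs S)" using nbrs_subset_B finite_B by (rule finite_subset)
  moreover have "card S < card (nbrs S)" if "bend e \<in> nbrs S"
    using card_less_card_nbrs[OF _ e] S that by auto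
  ultimately show ?thesis using card_le_card_nbrs[of S] S by (cases "bend e \<in> nbrs S") auto
qed

lemma perfect_matching_image_inj:
  assumes g: "\<And>x. x \<in> A \<Longrightarrow> g x \<in> edges H \<and> aend (g x) = x"
    and inj: "inj_on (bend \<circ> g) A"
  shows "perfect_matching H (g ` A)"
proof (rule perfect_matching_image[OF g])
  have "(bend \<circ> g) ` A \<subseteq> B" using g ends_eq by auto
  moreover have "card ((bend \<circ> g) ` A) = card B" using card_image[OF inj] card_A_eq_card_B by simp
  ultimately have "(bend \<circ> g) ` A = B" using finite_B by (intro card_subset_eq)
  with inj show "bij_betw (bend \<circ> g) A B" by (simp add: bij_betw_def)
qed

lemma edge_in_perfect_matching:
  assumes e0: "e0 \<in> edges H"
  shows "\<exists>M. perfect_matching H M \<and> e0 \<in> M"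
proof -
  define u v where "u = aend e0" and "v = bend e0"
  have u: "u \<in> A" using ends_eq[OF e0] by (simp add: u_def)
  have "\<exists>f. inj_on f (A - {u}) \<and> (\<forall>x\<in>A - {u}. f x \<in> nbrs {x} - {v})"
  proof (rule Hall_marriage)
    show "finite (A - {u})" using finite_A by simp
    show "finite (nbrs {x} - {v})" for x using finite_subset[OF nbrs_subset_B finite_B] by simp
  qed (use Hall_condition_avoiding_edge[OF e0] in \<open>simp add: u_def v_def\<close>)
  then obtain f where f: "inj_on f (A - {u})" "\<forall>x\<in>A - {u}. f x \<in> nbrs {x} - {v}" by blast
  have "\<forall>x\<in>A - {u}. \<exists>e. e \<in> edges H \<and> aend e = x \<and> bend e = f x"
    using f(2) unfolding nbrs_def by fastforce
  then obtain g' where g': "\<forall>x\<in>A - {u}. g' x \<in> edges H \<and> aend (g' x) = x \<and> bend (g' x) = f x"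
    by (metis bchoice)
  define g where "g = g'(u := e0)"
  have g: "g x \<in> edges H \<and> aend (g x) = x" if "x \<in> A" for x
    using g' that e0 by (auto simp: g_def u_def)
  have bend_g: "(bend \<circ> g) x = f x" if "x \<in> A - {u}" for x
    using g' that by (simp add: g_def)
  have "inj_on (bend \<circ> g) (A - {u})" using inj_on_cong[of "A - {u}" f] bend_g f(1) by simp
  moreover have "(bend \<circ> g) u \<notin> (bend \<circ> g) ` (A - {u})"
    using f(2) bend_g by (auto simp: g_def v_def)
  ultimately have "inj_on (bend \<circ> g) (insert u (A - {u}))" unfolding inj_on_insert by simp
  then have "perfect_matching H (g ` A)" using u g by (intro perfect_matching_image_inj) (simp_all add: insert_absorb)
  moreover have "e0 \<in> g ` A" using u by (auto simp: g_def)
  ultimately show ?thesis by blast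
qed

end

section \<open>Tight cuts\<close>

locale regular_tight_cut = regular_bipartite_multigraph H A B k
  for H :: "('v, 'e) mgraph" and A B :: "'v set" and k :: nat +
  fixes X :: "'v set"
  assumes tight: "tight_cut H X" and larger_B_side: "card (X \<inter> A) < card (X \<inter> B)"
begin

lemma X_subset_verts: "X \<subseteq> verts H"
  using tight by (simp add: tight_cut_def)

lemma finite_cut: "finite (cut H X)"
  using finite_edges by (simp add: cut_def)

lemma perfect_matching_crosses_inward:
  assumes "perfect_matching H M"
  shows "card (X \<inter> B) = Suc (card (X \<inter> A))" "\<forall>e\<in>M. aend e \<in> X \<longrightarrow> bend e \<in> X"
proof -
  have M: "M \<subseteq> edges H" and deg: "\<And>v. v \<in> verts H \<Longrightarrow> deg H M v = 1"
    using assms by (auto simp: perfect_matching_def)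
  have fin: "finite M" using M finite_edges by (rule finite_subset)
  define outward inward where
    "outward = {e \<in> M. aend e \<in> X \<and> bend e \<notin> X}" and "inward = {e \<in> M. aend e \<notin> X \<and> bend e \<in> X}"
  have "(\<Sum>v\<in>X \<inter> A. deg H M v) = 1 * card (X \<inter> A)" "(\<Sum>v\<in>X \<inter> B. deg H M v) = 1 * card (X \<inter> B)"
    using deg X_subset_verts by (intro sum_deg_const; blast)+
  then have balance: "card (X \<inter> B) + card outward = card (X \<inter> A) + card inward"
    using sum_deg_crossing_balance[OF M, of X] by (simp add: outward_def inward_def)
  have "card (cut H X \<inter> M) = 1" using tight assms by (simp add: tight_cut_def)
  moreover have "cut H X \<inter> M = outward \<union> inward" using M by (auto simp: cut_iff outward_def inward_def)
  moreover have "card (outward \<union> inward) = card outward + card inward"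
    using fin by (intro card_Un_disjoint) (auto simp: outward_def inward_def)
  ultimately have "card outward + card inward = 1" by simp
  with balance larger_B_side have "card outward = 0" "card (X \<inter> B) = Suc (card (X \<inter> A))" by auto
  then show "card (X \<inter> B) = Suc (card (X \<inter> A))" "\<forall>e\<in>M. aend e \<in> X \<longrightarrow> bend e \<in> X"
    using fin by (auto simp: outward_def)
qed

lemma bend_in_X_if_aend_in_X: "e \<in> edges H \<Longrightarrow> aend e \<in> X \<Longrightarrow> bend e \<in> X"
  using edge_in_perfect_matching perfect_matching_crosses_inward(2) by blast

lemma card_X_B: "card (X \<inter> B) = Suc (card (X \<inter> A))"
proof -
  have "X \<inter> B \<noteq> {}" using larger_B_side by auto
  then obtain w where w: "w \<in> X \<inter> B" by blast
  then have "deg H (edges H) w \<noteq> 0" using regular degree_pos X_subset_verts by auto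
  then have "{e \<in> edges H. w \<in> ends H e} \<noteq> {}" unfolding deg_def by (metis card.empty)
  then obtain e where "e \<in> edges H" by blast
  then show ?thesis using edge_in_perfect_matching perfect_matching_crosses_inward(1) by blast
qed

lemma cut_iff_inward: "e \<in> cut H X \<longleftrightarrow> e \<in> edges H \<and> aend e \<notin> X \<and> bend e \<in> X"
  using cut_iff bend_in_X_if_aend_in_X by blast

lemma sum_deg_X_B:
  assumes F: "F \<subseteq> edges H"
  shows "(\<Sum>v\<in>X \<inter> B. deg H F v) = (\<Sum>v\<in>X \<inter> A. deg H F v) + card (F \<inter> cut H X)"
proof -
  have outward: "{e \<in> F. aend e \<in> X \<and> bend e \<notin> X} = {}"
    using F bend_in_X_if_aend_in_X by blast
  have inward: "{e \<in> F. aend e \<notin> X \<and> bend e \<in> X} = F \<inter> cut H X"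
    using F cut_iff_inward by blast
  show ?thesis using sum_deg_crossing_balance[OF F, of X] unfolding outward inward by simp
qed

lemma card_cut: "card (cut H X) = k"
proof -
  have "(\<Sum>v\<in>X \<inter> B. deg H (edges H) v) = k * card (X \<inter> B)"
    "(\<Sum>v\<in>X \<inter> A. deg H (edges H) v) = k * card (X \<inter> A)"
    using regular X_subset_verts by (intro sum_deg_const; blast)+
  moreover have "edges H \<inter> cut H X = cut H X" by (auto simp: cut_def)
  ultimately show ?thesis using sum_deg_X_B[of "edges H"] card_X_B by simp
qed

lemma lambda_matching_card_cut:
  assumes F: "lambda_matching H a b F" and a: "a \<in> A" and b: "b \<in> B"
  shows "card (F \<inter> cut H X) + 2 * of_bool (a \<in> X) = 1 + 2 * of_bool (b \<in> X)"
proof -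
  have "F \<subseteq> edges H" using F by (simp add: lambda_matching_def)
  then have "(\<Sum>v\<in>X \<inter> B. deg H F v) = (\<Sum>v\<in>X \<inter> A. deg H F v) + card (F \<inter> cut H X)"
    by (rule sum_deg_X_B)
  moreover have "(\<Sum>v\<in>X \<inter> A. deg H F v) = card (X \<inter> A) + 2 * card (X \<inter> A \<inter> {a, b})"
    using verts_eq finite_A by (intro sum_deg_lambda_matching[OF F]) auto
  moreover have "(\<Sum>v\<in>X \<inter> B. deg H F v) = card (X \<inter> B) + 2 * card (X \<inter> B \<inter> {a, b})"
    using verts_eq finite_B by (intro sum_deg_lambda_matching[OF F]) auto
  moreover have "X \<inter> A \<inter> {a, b} = (if a \<in> X then {a} else {})"
    "X \<inter> B \<inter> {a, b} = (if b \<in> X then {b} else {})"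
    using a b A_B_disjoint by auto
  ultimately show ?thesis using card_X_B by (cases "a \<in> X"; cases "b \<in> X") simp_all
qed

lemma cut_edge_in_perfect_matching:
  assumes "e \<in> cut H X"
  obtains M where "perfect_matching H M" "M \<inter> cut H X = {e}"
proof -
  obtain M where M: "perfect_matching H M" "e \<in> M"
    using assms edge_in_perfect_matching by (auto simp: cut_def)
  then have "card (M \<inter> cut H X) = 1" using tight by (simp add: tight_cut_def Int_commute)
  then obtain e' where "M \<inter> cut H X = {e'}" by (rule card_1_singletonE)
  moreover from this have "e' = e" using M(2) assms by (metis IntI singletonD)
  ultimately have "M \<inter> cut H X = {e}" by simp
  with M(1) show ?thesis by (rule that)
qed

lemma not_lambda_matchable_out_of_X:
  assumes "a \<in> X \<inter> A" "b \<in> (verts H - X) \<inter> B"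
  shows "\<not> lambda_matchable H a b"
  using lambda_matching_card_cut[of a b] assms by (auto simp: lambda_matchable_def)

lemma lambda_matchable_of_shrink_within_X:
  assumes F1: "lambda_matching (shrink H (verts H - X)) (Some a) (Some b) F1"
    and a: "a \<in> X \<inter> A" and b: "b \<in> X \<inter> B"
  shows "lambda_matchable H a b"
proof -
  have F1E: "F1 \<subseteq> edges (shrink H (verts H - X))" using F1 by (simp add: lambda_matching_def)
  have "card (F1 \<inter> cut H X) = 1"
    using deg_lambda_matching[OF F1, of None] deg_shrink_None[OF multigraph F1E]
      cut_complement[OF multigraph] by (simp add: verts_shrink)
  then obtain e0 where e0: "F1 \<inter> cut H X = {e0}" by (rule card_1_singletonE)
  then obtain M where M: "perfect_matching H M" "M \<inter> cut H X = {e0}"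
    using cut_edge_in_perfect_matching by blast
  have ME: "M \<subseteq> edges H" using M(1) by (simp add: perfect_matching_def)
  have "M \<inter> edges (shrink H X) \<inter> cut H X = M \<inter> cut H X"
    using cut_subset_edges_shrink[OF multigraph] by blast
  moreover have "deg (shrink H X) (M \<inter> edges (shrink H X)) (Some v) = (if v \<in> {a, b} then 3 else 1)"
    if "v \<in> verts H" "v \<notin> X" for v
    using deg_shrink_restrict[OF that(2) ME] M(1) that a b by (auto simp: perfect_matching_def)
  moreover have "deg (shrink H (verts H - X)) F1 (Some v) = (if v \<in> {a, b} then 3 else 1)"
    if "v \<in> verts H" "v \<in> X" for v
    using deg_lambda_matching[OF F1, of "Some v"] that by (auto simp: verts_shrink)
  moreover have "a \<in> verts H" "b \<in> verts H" using a b verts_eq by auto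
  ultimately have "lambda_matching H a b (F1 \<union> (M \<inter> edges (shrink H X)))"
    using e0 M(2) F1E by (intro lambda_matching_glue[OF multigraph]) auto
  then show ?thesis by (auto simp: lambda_matchable_def)
qed

lemma lambda_matchable_within_X_iff:
  assumes a: "a \<in> X \<inter> A" and b: "b \<in> X \<inter> B"
  shows "lambda_matchable H a b \<longleftrightarrow> lambda_matchable (shrink H (verts H - X)) (Some a) (Some b)"
proof
  assume "lambda_matchable H a b"
  then obtain F where F: "lambda_matching H a b F" by (auto simp: lambda_matchable_def)
  then have "card (F \<inter> cut H (verts H - X)) = 1"
    using lambda_matching_card_cut[OF F] a b cut_complement[OF multigraph] by simp
  then have "lambda_matching (shrink H (verts H - X)) (Some a) (Some b) (F \<inter> edges (shrink H (verts H - X)))"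
    using lambda_matching_shrink[OF multigraph F, of "verts H - X"] a b verts_eq by auto
  then show "lambda_matchable (shrink H (verts H - X)) (Some a) (Some b)"
    by (auto simp: lambda_matchable_def)
qed (use lambda_matchable_of_shrink_within_X a b in \<open>auto simp: lambda_matchable_def\<close>)

end

locale cubic_tight_cut = regular_tight_cut H A B 3 X
  for H :: "('v, 'e) mgraph" and A B X :: "'v set"
begin

lemma cut_subset_of_lambda_matching_shrink:
  assumes "lambda_matching (shrink H S) p q F" "None \<in> {p, q}" "cut H S = cut H X"
  shows "cut H X \<subseteq> F"
proof -
  have "F \<subseteq> edges (shrink H S)" using assms(1) by (simp add: lambda_matching_def)
  then have "card (F \<inter> cut H X) = card (cut H X)"
    using deg_lambda_matching[OF assms(1), of None] deg_shrink_None[OF multigraph] assms(2,3) card_cut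
    by (simp add: verts_shrink)
  then show ?thesis using card_subset_eq[OF finite_cut, of "F \<inter> cut H X"] by auto
qed

lemma lambda_matchable_of_shrinks_across:
  assumes F1: "lambda_matching (shrink H (verts H - X)) None (Some b) F1"
    and F2: "lambda_matching (shrink H X) (Some a) None F2"
    and a: "a \<in> (verts H - X) \<inter> A" and b: "b \<in> X \<inter> B"
  shows "lambda_matchable H a b"
proof -
  have "cut H X \<subseteq> F1" "cut H X \<subseteq> F2"
    using cut_subset_of_lambda_matching_shrink[OF F1] cut_subset_of_lambda_matching_shrink[OF F2]
      cut_complement[OF multigraph] by auto
  then have "F1 \<inter> cut H X = F2 \<inter> cut H X" by blast
  moreover have "deg (shrink H (verts H - X)) F1 (Some v) = (if v \<in> {a, b} then 3 else 1)"
    if "v \<in> verts H" "v \<in> X" for v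
    using deg_lambda_matching[OF F1, of "Some v"] that a by (auto simp: verts_shrink)
  moreover have "deg (shrink H X) F2 (Some v) = (if v \<in> {a, b} then 3 else 1)"
    if "v \<in> verts H" "v \<notin> X" for v
    using deg_lambda_matching[OF F2, of "Some v"] that b by (auto simp: verts_shrink)
  moreover have "a \<in> verts H" "b \<in> verts H" using a b verts_eq by auto
  ultimately have "lambda_matching H a b (F1 \<union> F2)"
    using F1 F2 by (intro lambda_matching_glue[OF multigraph]) (auto simp: lambda_matching_def)
  then show ?thesis by (auto simp: lambda_matchable_def)
qed

lemma lambda_matchable_across_iff:
  assumes a: "a \<in> (verts H - X) \<inter> A" and b: "b \<in> X \<inter> B"
  shows "lambda_matchable H a b \<longleftrightarrow>
    lambda_matchable (shrink H (verts H - X)) None (Some b) \<and> lambda_matchable (shrink H X) (Some a) None"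
proof
  assume "lambda_matchable H a b"
  then obtain F where F: "lambda_matching H a b F" by (auto simp: lambda_matchable_def)
  have ab: "a \<in> verts H" "b \<in> verts H" using a b X_subset_verts by auto
  have cut: "card (F \<inter> cut H X) = 3" using lambda_matching_card_cut[OF F] a b by simp
  have "lambda_matching (shrink H (verts H - X)) (if a \<in> verts H - X then None else Some a)
      (if b \<in> verts H - X then None else Some b) (F \<inter> edges (shrink H (verts H - X)))"
    using a cut cut_complement[OF multigraph] by (intro lambda_matching_shrink[OF multigraph F ab]) simp
  moreover have "lambda_matching (shrink H X) (if a \<in> X then None else Some a)
      (if b \<in> X then None else Some b) (F \<inter> edges (shrink H X))"
    using b cut by (intro lambda_matching_shrink[OF multigraph F ab]) simp
  ultimately show "lambda_matchable (shrink H (verts H - X)) None (Some b) \<and>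
      lambda_matchable (shrink H X) (Some a) None"
    using a b ab by (auto simp: lambda_matchable_def)
qed (use lambda_matchable_of_shrinks_across a b in \<open>auto simp: lambda_matchable_def\<close>)

end

theorem lemma2p2:
  fixes H :: "('v, 'e) mgraph" and A B X :: "'v set"
  assumes "multigraph H" and "connected_graph H" and "cubic H"
    and "bipartite_on H A B"
    and "tight_cut H X"
    and "card (X \<inter> A) < card (X \<inter> B)"
  shows "(\<forall>a\<in>X \<inter> A. \<forall>b\<in>(verts H - X) \<inter> B. \<not> lambda_matchable H a b)
    \<and> (\<forall>a\<in>X \<inter> A. \<forall>b\<in>X \<inter> B.
          lambda_matchable H a b \<longleftrightarrow>
          lambda_matchable (shrink H (verts H - X)) (Some a) (Some b))
    \<and> (\<forall>a\<in>(verts H - X) \<inter> A. \<forall>b\<in>X \<inter> B.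
          lambda_matchable H a b \<longleftrightarrow>
          (lambda_matchable (shrink H (verts H - X)) None (Some b) \<and>
           lambda_matchable (shrink H X) (Some a) None))"
proof -
  interpret cubic_tight_cut H A B X
    using assms by unfold_locales (auto simp: cubic_def)
  show ?thesis
    using not_lambda_matchable_out_of_X lambda_matchable_within_X_iff lambda_matchable_across_iff
    by blast
qed

end
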